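(* Let $N\ge2$, $f\in L^2(\mathbb T^N)$, and for $n\ge1$ let $$f_n(t_1,t_2,\dots,t_N)=\sum_{k=-n}^{n}t_1^k\,C_{1k}\{f\}(t_2,\dots,t_N),$$ where $C_{1k}\{f\}(t_2,\dots,t_N)=\frac1{2\pi}\int_{\mathbb T}f(t_1,t_2,\dots,t_N)t_1^{-k}\,|dt_1|$. Then $f_n\rightarrowtail f$ in $L^2(\mathbb T^N)$.
   Context: $\mathbb T$ is the unit circle. A sequence $f_n\in L^2(\mathbb T^N)$ converges to $f\in L^p(\mathbb T^N)$ ($p\ge1$) "restricted to hyperplanes", written $f_n\rightarrowtail f$ in $L^p(\mathbb T^N)$, if $f_n\to f$ in $L^p(\mathbb T^N)$ and, for each $l=2,3,\dots,N$ and a.e. $(t_l,\dots,t_N)\in\mathbb T^{N-l+1}$, $f_n(\cdot,t_l,\dots,t_N)\to f(\cdot,t_l,\dots,t_N)$ in $L^p(\mathbb T^{l-1})$ as functions of $(t_1,\dots,t_{l-1})$. *)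

theory Defs
  imports "HOL-Analysis.Analysis"
begin

text \<open>Arc-length measure |dt| on the unit circle T, as the image of Lebesgue
measure on [0, 2 pi) under theta maps to cis theta.\<close>
definition circle_measure :: "complex measure" where
  "circle_measure = distr (restrict_space lborel {0..<2*pi})
                          (restrict_space borel (sphere 0 1)) cis"

definition torus_on :: "nat set \<Rightarrow> (nat \<Rightarrow> complex) measure" where
  "torus_on I = PiM I (\<lambda>_. circle_measure)"

definition torus :: "nat \<Rightarrow> (nat \<Rightarrow> complex) measure" where
  "torus N = torus_on {1..N}"

definition Lp_mem :: "real \<Rightarrow> 'a measure \<Rightarrow> ('a \<Rightarrow> complex) \<Rightarrow> bool" where
  "Lp_mem p M g \<longleftrightarrow> g \<in> borel_measurable M \<and>
     (\<integral>\<^sup>+ x. ennreal (norm (g x) powr p) \<partial>M) < \<infinity>"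

definition Lp_conv :: "real \<Rightarrow> 'a measure \<Rightarrow> (nat \<Rightarrow> 'a \<Rightarrow> complex) \<Rightarrow> ('a \<Rightarrow> complex) \<Rightarrow> bool" where
  "Lp_conv p M fs g \<longleftrightarrow>
     ((\<lambda>n. \<integral>\<^sup>+ x. ennreal (norm (fs n x - g x) powr p) \<partial>M) \<longlonglongrightarrow> 0)"

text \<open>Convergence restricted to hyperplanes: f_n \<rightarrowtail> f in L^p(T^N).\<close>
definition rconv :: "real \<Rightarrow> nat \<Rightarrow> (nat \<Rightarrow> (nat \<Rightarrow> complex) \<Rightarrow> complex)
                      \<Rightarrow> ((nat \<Rightarrow> complex) \<Rightarrow> complex) \<Rightarrow> bool" where
  "rconv p N fs f \<longleftrightarrow>
     (\<forall>n. Lp_mem 2 (torus N) (fs n)) \<and> Lp_mem p (torus N) f \<and>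
     Lp_conv p (torus N) fs f \<and>
     (\<forall>l\<in>{2..N}. AE y in torus_on {l..N}.
        Lp_conv p (torus_on {1..<l})
          (\<lambda>n x. fs n (merge {1..<l} {l..N} (x, y)))
          (\<lambda>x. f (merge {1..<l} {l..N} (x, y))))"

definition C1 :: "int \<Rightarrow> ((nat \<Rightarrow> complex) \<Rightarrow> complex) \<Rightarrow> (nat \<Rightarrow> complex) \<Rightarrow> complex" where
  "C1 k f t = complex_of_real (1 / (2*pi)) *
     (\<integral> s. f (t(1 := s)) * s powi (-k) \<partial>circle_measure)"

end

theory Submission
  imports Defs
begin

(* For fixed t_2, ..., t_N the function f_n is the n-th symmetric Fourier partial sum of the
   fibre s |-> f(s, t_2, ..., t_N) on the circle.  Trigonometric polynomials are dense in L^2 of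
   the circle (Stone-Weierstrass for continuous functions, a Dynkin argument for indicators of
   Borel sets, then simple functions), and the error of the partial sum is orthogonal to all
   trigonometric polynomials of degree at most n, so the partial sums of every L^2 fibre converge
   to it, with error at most the norm of the fibre (Bessel).  By Tonelli almost every fibre of f
   is in L^2, and dominated convergence over the remaining variables gives f_n -> f in L^2(T^N).
   Fixing t_l, ..., t_N instead, almost every slice of f is in L^2(T^(l-1)), its partial sums in
   t_1 are the corresponding slices of f_n, and the same argument applies on the smaller torus. *)

lemma power2_norm_add_le:
  fixes a b :: "'a::real_normed_vector"
  shows "(norm (a + b))\<^sup>2 \<le> 2 * (norm a)\<^sup>2 + 2 * (norm b)\<^sup>2"
proof -
  have "(norm (a + b))\<^sup>2 \<le> (norm a + norm b)\<^sup>2"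
    by (simp add: norm_triangle_ineq power_mono)
  also have "\<dots> \<le> 2 * (norm a)\<^sup>2 + 2 * (norm b)\<^sup>2"
    using zero_le_power2[of "norm a - norm b"] by (simp add: power2_diff power2_sum)
  finally show ?thesis .
qed

lemma finite_int_subset_symmetric_interval:
  assumes "finite (F :: int set)"
  obtains m :: nat where "F \<subseteq> {-int m..int m}"
proof
  have "\<bar>k\<bar> \<le> Max (insert 0 (abs ` F))" if "k \<in> F" for k
    using assms that by (intro Max_ge) auto
  then show "F \<subseteq> {-int (nat (Max (insert 0 (abs ` F))))..int (nat (Max (insert 0 (abs ` F))))}"
    by fastforce
qed

lemma bounded_linear_complex_to_real:
  assumes "bounded_linear (q :: complex \<Rightarrow> real)"
  shows "q s = Re s * q 1 + Im s * q \<i>"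
proof -
  interpret bounded_linear q by fact
  have "s = Re s *\<^sub>R 1 + Im s *\<^sub>R \<i>"
    by (simp add: complex_eq_iff)
  then have "q s = q (Re s *\<^sub>R 1 + Im s *\<^sub>R \<i>)"
    by simp
  then show ?thesis by (simp add: add scaleR)
qed

lemma LIMSEQ_min_infdist_indicator:
  assumes "closed C" "C \<noteq> {}"
  shows "(\<lambda>m. min 1 (real m * infdist x C)) \<longlonglongrightarrow> indicator (- C) x"
proof (cases "x \<in> C")
  case False
  then have d: "infdist x C > 0"
    using assms infdist_pos_not_in_closed by blast
  obtain N :: nat where "1 / infdist x C < N"
    using reals_Archimedean2 by blast
  with d have "1 < real N * infdist x C"
    by (simp add: field_simps)
  moreover have "real N * infdist x C \<le> real m * infdist x C" if "N \<le> m" for m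
    using that d by (intro mult_right_mono) auto
  ultimately have "min 1 (real m * infdist x C) = 1" if "N \<le> m" for m
    using that by fastforce
  then have "\<forall>\<^sub>F m in sequentially. min 1 (real m * infdist x C) = 1"
    by (auto simp: eventually_sequentially)
  with False show ?thesis by (simp add: tendsto_eventually)
qed simp

lemma merge_fun_upd:
  "i \<in> I \<Longrightarrow> (merge I K (x, y))(i := s) = merge I K (x(i := s), y)"
  by (auto simp: merge_def fun_eq_iff)

lemma borel_measurable_cnj [measurable]: "cnj \<in> borel_measurable borel"
  by (intro borel_measurable_continuous_onI continuous_intros)

section \<open>The circle measure\<close>

abbreviation unit_circle :: "complex set" where
  "unit_circle \<equiv> sphere 0 1"

lemma space_circle_measure [simp]: "space circle_measure = unit_circle"
  unfolding circle_measure_def by (simp add: space_restrict_space)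

lemma sets_circle_measure: "sets circle_measure = sets (restrict_space borel unit_circle)"
  unfolding circle_measure_def by simp

lemma measurable_circle_measure_eq:
  "measurable circle_measure M = measurable (restrict_space borel unit_circle) M"
  by (rule measurable_cong_sets[OF sets_circle_measure refl])

lemma cis_measurable: "cis \<in> measurable borel (restrict_space borel unit_circle)"
  by (intro measurable_restrict_space2 borel_measurable_continuous_onI continuous_intros) auto

lemma cis_measurable_interval:
  "cis \<in> measurable (restrict_space lborel {0..<2*pi}) (restrict_space borel unit_circle)"
  by (rule measurable_restrict_space1) (simp add: cis_measurable)

lemma emeasure_circle_measure: "emeasure circle_measure unit_circle = 2 * pi"
proof -
  have "unit_circle \<in> sets (restrict_space borel unit_circle)"
    using sets.top[of "restrict_space borel unit_circle"] by (simp add: space_restrict_space)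
  then have "emeasure circle_measure unit_circle = emeasure (restrict_space lborel {0..<2*pi}) {0..<2*pi}"
    unfolding circle_measure_def
    by (subst emeasure_distr[OF cis_measurable_interval]) (simp_all add: space_restrict_space vimage_def)
  also have "\<dots> = 2 * pi"
    by (subst emeasure_restrict_space) auto
  finally show ?thesis .
qed

interpretation circle: finite_measure circle_measure
  by (rule finite_measureI) (simp add: emeasure_circle_measure)

lemma measure_circle_measure: "measure circle_measure unit_circle = 2 * pi"
  by (simp add: measure_def emeasure_circle_measure)

lemma borel_measurable_circle_measure_continuous_on:
  "continuous_on unit_circle g \<Longrightarrow> g \<in> borel_measurable circle_measure"
  unfolding measurable_circle_measure_eq by (rule borel_measurable_continuous_on_restrict)

lemma power_int_borel_measurable_circle [measurable]:
  "(\<lambda>s. s powi m) \<in> borel_measurable circle_measure"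
  by (intro borel_measurable_circle_measure_continuous_on continuous_intros) auto

lemma integral_circle_measure:
  fixes g :: "complex \<Rightarrow> 'b::{banach, second_countable_topology}"
  assumes "g \<in> borel_measurable circle_measure"
  shows "integral\<^sup>L circle_measure g = (\<integral>x. indicator {0..2*pi} x *\<^sub>R g (cis x) \<partial>lborel)"
proof -
  have g: "g \<in> borel_measurable (restrict_space borel unit_circle)"
    using assms unfolding measurable_circle_measure_eq .
  then have [measurable]: "(\<lambda>x. g (cis x)) \<in> borel_measurable borel"
    using measurable_compose[OF cis_measurable] by blast
  have "integral\<^sup>L circle_measure g = (\<integral>x. indicator {0..<2*pi} x *\<^sub>R g (cis x) \<partial>lborel)"
    unfolding circle_measure_def
    by (simp add: integral_distr[OF cis_measurable_interval g] integral_restrict_space)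
  also have "\<dots> = (\<integral>x. indicator {0..2*pi} x *\<^sub>R g (cis x) \<partial>lborel)"
    by (intro integral_cong_AE eventually_mono[OF AE_lborel_singleton[of "2*pi"]])
       (auto simp: indicator_def)
  finally show ?thesis .
qed

lemma integral_circle_measure_power_int:
  "(\<integral>s. s powi m \<partial>circle_measure) = (if m = 0 then 2 * pi else 0)"
proof (cases "m = 0")
  case True
  then show ?thesis by (simp add: measure_circle_measure scaleR_conv_of_real)
next
  case False
  have "(\<integral>s. s powi m \<partial>circle_measure) = (\<integral>x. indicator {0..2*pi} x *\<^sub>R cis (of_int m * x) \<partial>lborel)"
    by (simp add: integral_circle_measure cis_power_int)
  also have "\<dots> = cis (of_int m * (2*pi)) / (\<i> * of_int m) - cis (of_int m * 0) / (\<i> * of_int m)"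
    using False
    by (intro integral_FTC_atLeastAtMost continuous_intros)
       (auto intro!: derivative_eq_intros simp: has_vector_derivative_def fun_eq_iff
          scaleR_conv_of_real field_simps simp del: of_int_mult)
  also have "\<dots> = 0"
    using cis_multiple_2pi[of "of_int m"] by (simp add: mult.commute)
  finally show ?thesis using False by simp
qed

section \<open>Fourier partial sums and Bessel's inequality\<close>

definition L2_circle :: "(complex \<Rightarrow> complex) \<Rightarrow> bool" where
  "L2_circle u \<longleftrightarrow>
     u \<in> borel_measurable circle_measure \<and> integrable circle_measure (\<lambda>s. (cmod (u s))\<^sup>2)"

definition circle_sqdist :: "(complex \<Rightarrow> complex) \<Rightarrow> (complex \<Rightarrow> complex) \<Rightarrow> real" where
  "circle_sqdist u v = (\<integral>s. (cmod (u s - v s))\<^sup>2 \<partial>circle_measure)"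

definition trig_poly :: "int set \<Rightarrow> (int \<Rightarrow> complex) \<Rightarrow> complex \<Rightarrow> complex" where
  "trig_poly F a s = (\<Sum>k\<in>F. a k * s powi k)"

definition fourier_coeff :: "(complex \<Rightarrow> complex) \<Rightarrow> int \<Rightarrow> complex" where
  "fourier_coeff u k = complex_of_real (1 / (2*pi)) * (\<integral>s. u s * s powi (-k) \<partial>circle_measure)"

definition fourier_sum :: "nat \<Rightarrow> (complex \<Rightarrow> complex) \<Rightarrow> complex \<Rightarrow> complex" where
  "fourier_sum n u = trig_poly {-int n..int n} (fourier_coeff u)"

lemma L2_circle_bounded:
  assumes "u \<in> borel_measurable circle_measure" and "\<And>s. s \<in> unit_circle \<Longrightarrow> cmod (u s) \<le> B"
  shows "L2_circle u"
  unfolding L2_circle_def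
proof
  show "integrable circle_measure (\<lambda>s. (cmod (u s))\<^sup>2)"
    using assms by (intro circle.integrable_const_bound[where B="B\<^sup>2"] AE_I2) (auto intro: power_mono)
qed fact

lemma L2_circle_add:
  assumes "L2_circle u" "L2_circle v"
  shows "L2_circle (\<lambda>s. u s + v s)"
proof -
  have [measurable]: "u \<in> borel_measurable circle_measure" "v \<in> borel_measurable circle_measure"
    using assms unfolding L2_circle_def by auto
  have "integrable circle_measure (\<lambda>s. 2 * (cmod (u s))\<^sup>2 + 2 * (cmod (v s))\<^sup>2)"
    using assms unfolding L2_circle_def by auto
  then show ?thesis
    unfolding L2_circle_def
    by (auto intro: Bochner_Integration.integrable_bound AE_I2 simp: power2_norm_add_le)
qed

lemma L2_circle_cmult: "L2_circle u \<Longrightarrow> L2_circle (\<lambda>s. c * u s)"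
  unfolding L2_circle_def by (auto simp: norm_mult power_mult_distrib)

lemma L2_circle_diff: "L2_circle u \<Longrightarrow> L2_circle v \<Longrightarrow> L2_circle (\<lambda>s. u s - v s)"
  using L2_circle_add[of u "\<lambda>s. -1 * v s"] L2_circle_cmult[of v "-1"] by simp

lemma L2_circle_sum:
  "finite I \<Longrightarrow> (\<And>i. i \<in> I \<Longrightarrow> L2_circle (u i)) \<Longrightarrow> L2_circle (\<lambda>s. \<Sum>i\<in>I. u i s)"
proof (induction I rule: finite_induct)
  case empty
  show ?case by (rule L2_circle_bounded[where B=0]) simp_all
next
  case (insert i I)
  then show ?case using L2_circle_add[of "u i"] by simp
qed

lemma integrable_L2_circle_mult_bounded:
  assumes u: "L2_circle u" and g: "g \<in> borel_measurable circle_measure"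
    and B: "\<And>s. s \<in> unit_circle \<Longrightarrow> cmod (g s) \<le> B"
  shows "integrable circle_measure (\<lambda>s. u s * g s)"
proof (rule Bochner_Integration.integrable_bound)
  have "0 \<le> B" using order_trans[OF norm_ge_zero B[of 1]] by simp
  have "cmod (u s) \<le> 1 + (cmod (u s))\<^sup>2" for s
    using zero_le_power2[of "cmod (u s) - 1"] zero_le_power2[of "cmod (u s)"]
    unfolding power2_diff power_one mult_1_right by linarith
  with \<open>0 \<le> B\<close> B show "AE s in circle_measure. norm (u s * g s) \<le> norm ((1 + (cmod (u s))\<^sup>2) * B)"
    by (intro AE_I2) (auto simp: norm_mult intro: mult_mono)
  show "integrable circle_measure (\<lambda>s. (1 + (cmod (u s))\<^sup>2) * B)"
    using u unfolding L2_circle_def by simp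
  have [measurable]: "u \<in> borel_measurable circle_measure"
    using u unfolding L2_circle_def by simp
  show "(\<lambda>s. u s * g s) \<in> borel_measurable circle_measure"
    using g by measurable
qed

lemma integrable_circle_sqdist:
  "L2_circle u \<Longrightarrow> L2_circle v \<Longrightarrow> integrable circle_measure (\<lambda>s. (cmod (u s - v s))\<^sup>2)"
  using L2_circle_diff unfolding L2_circle_def by blast

lemma circle_sqdist_nonneg: "0 \<le> circle_sqdist u v"
  unfolding circle_sqdist_def by (simp add: integral_nonneg_AE)

lemma norm_power_int_unit_circle [simp]: "s \<in> unit_circle \<Longrightarrow> cmod (s powi k) = 1"
  by (simp add: norm_power_int)

lemma trig_poly_borel_measurable [measurable]: "trig_poly F a \<in> borel_measurable circle_measure"
  unfolding trig_poly_def[abs_def] by measurable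

lemma norm_trig_poly_le: "s \<in> unit_circle \<Longrightarrow> cmod (trig_poly F a s) \<le> (\<Sum>k\<in>F. cmod (a k))"
  unfolding trig_poly_def by (rule order_trans[OF norm_sum]) (simp add: norm_mult)

lemma L2_circle_trig_poly: "L2_circle (trig_poly F a)"
  by (rule L2_circle_bounded[OF trig_poly_borel_measurable norm_trig_poly_le])

lemma L2_circle_fourier_sum: "L2_circle (fourier_sum n u)"
  unfolding fourier_sum_def by (rule L2_circle_trig_poly)

lemma trig_poly_empty [simp]: "trig_poly {} a = (\<lambda>s. 0)"
  by (simp add: trig_poly_def fun_eq_iff)

lemma trig_poly_extend:
  "F \<subseteq> G \<Longrightarrow> finite G \<Longrightarrow> trig_poly F a = trig_poly G (\<lambda>k. if k \<in> F then a k else 0)"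
  unfolding trig_poly_def fun_eq_iff by (intro allI sum.mono_neutral_cong_left) auto

lemma trig_poly_diff: "trig_poly G a s - trig_poly G b s = trig_poly G (\<lambda>k. a k - b k) s"
  unfolding trig_poly_def by (simp add: sum_subtractf left_diff_distrib)

lemma trig_poly_add:
  assumes "finite F" "finite G"
  shows "trig_poly F a s + trig_poly G b s
       = trig_poly (F \<union> G) (\<lambda>k. (if k \<in> F then a k else 0) + (if k \<in> G then b k else 0)) s"
  using assms trig_poly_extend[of F "F \<union> G" a] trig_poly_extend[of G "F \<union> G" b]
  by (simp add: trig_poly_def sum.distrib distrib_right)

lemma trig_poly_cmult: "c * trig_poly F a s = trig_poly F (\<lambda>k. c * a k) s"
  unfolding trig_poly_def by (simp add: sum_distrib_left ac_simps)

lemma power_int_add_unit_circle: "s \<in> unit_circle \<Longrightarrow> s powi j * s powi k = s powi (j + k)"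
  by (subst power_int_add) auto

lemma integrable_power_int_circle: "integrable circle_measure (\<lambda>s. c * (s powi j * s powi k))"
  by (intro circle.integrable_const_bound[where B="cmod c"] AE_I2) (simp_all add: norm_mult)

lemma integrable_L2_circle_mult_power_int:
  "L2_circle u \<Longrightarrow> integrable circle_measure (\<lambda>s. u s * s powi k)"
  by (rule integrable_L2_circle_mult_bounded[where B=1]) simp_all

lemma integral_power_int_orthogonal:
  "(\<integral>s. s powi j * s powi (-k) \<partial>circle_measure) = (if j = k then 2 * pi else 0)"
proof -
  have "(\<integral>s. s powi j * s powi (-k) \<partial>circle_measure) = (\<integral>s. s powi (j - k) \<partial>circle_measure)"
    by (intro Bochner_Integration.integral_cong refl) (simp add: power_int_add_unit_circle)
  then show ?thesis by (simp add: integral_circle_measure_power_int)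
qed

lemma fourier_remainder_orthogonal:
  assumes u: "L2_circle u" and k: "k \<in> {-int n..int n}"
  shows "(\<integral>s. (u s - fourier_sum n u s) * s powi (-k) \<partial>circle_measure) = 0"
proof -
  let ?K = "{-int n..int n}"
  have "(\<integral>s. fourier_sum n u s * s powi (-k) \<partial>circle_measure)
      = (\<integral>s. (\<Sum>j\<in>?K. fourier_coeff u j * (s powi j * s powi (-k))) \<partial>circle_measure)"
    unfolding fourier_sum_def trig_poly_def sum_distrib_right by (simp add: ac_simps)
  also have "\<dots> = (\<Sum>j\<in>?K. fourier_coeff u j * (\<integral>s. s powi j * s powi (-k) \<partial>circle_measure))"
    by (subst Bochner_Integration.integral_sum) (auto simp: integrable_power_int_circle)
  also have "\<dots> = fourier_coeff u k * (2 * pi)"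
    using k by (simp add: integral_power_int_orthogonal if_distrib cong: if_cong)
  also have "\<dots> = (\<integral>s. u s * s powi (-k) \<partial>circle_measure)"
    unfolding fourier_coeff_def by simp
  finally show ?thesis
    using integrable_L2_circle_mult_power_int[OF u] integrable_L2_circle_mult_power_int[OF L2_circle_fourier_sum]
    by (simp add: left_diff_distrib)
qed

lemma cnj_unit_circle: "s \<in> unit_circle \<Longrightarrow> cnj s = inverse s"
  using complex_norm_square[of s] by (intro inverse_unique[symmetric]) simp

lemma integral_mult_cnj_trig_poly_eq_0:
  assumes r: "L2_circle r" and F: "finite F"
    and orth: "\<And>k. k \<in> F \<Longrightarrow> (\<integral>s. r s * s powi (-k) \<partial>circle_measure) = 0"
  shows "(\<integral>s. r s * cnj (trig_poly F d s) \<partial>circle_measure) = 0"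
proof -
  have "(\<integral>s. r s * cnj (trig_poly F d s) \<partial>circle_measure)
      = (\<integral>s. (\<Sum>k\<in>F. cnj (d k) * (r s * s powi (-k))) \<partial>circle_measure)"
    by (intro Bochner_Integration.integral_cong refl)
       (simp add: trig_poly_def sum_distrib_left cnj_unit_circle power_int_minus power_int_inverse ac_simps)
  also have "\<dots> = (\<Sum>k\<in>F. cnj (d k) * (\<integral>s. r s * s powi (-k) \<partial>circle_measure))"
    by (subst Bochner_Integration.integral_sum) (auto intro: integrable_L2_circle_mult_power_int[OF r])
  also have "\<dots> = 0"
    using orth by simp
  finally show ?thesis .
qed

lemma integral_norm_add_trig_poly_orthogonal:
  assumes r: "L2_circle r" and F: "finite F"
    and orth: "\<And>k. k \<in> F \<Longrightarrow> (\<integral>s. r s * s powi (-k) \<partial>circle_measure) = 0"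
  shows "(\<integral>s. (cmod (r s + trig_poly F d s))\<^sup>2 \<partial>circle_measure)
       = (\<integral>s. (cmod (r s))\<^sup>2 \<partial>circle_measure) + (\<integral>s. (cmod (trig_poly F d s))\<^sup>2 \<partial>circle_measure)"
proof -
  let ?p = "trig_poly F d"
  have [measurable]: "r \<in> borel_measurable circle_measure"
    using r unfolding L2_circle_def by simp
  have ir: "integrable circle_measure (\<lambda>s. (cmod (r s))\<^sup>2)"
    and ip: "integrable circle_measure (\<lambda>s. (cmod (?p s))\<^sup>2)"
    using r L2_circle_trig_poly[of F d] unfolding L2_circle_def by auto
  have irp: "integrable circle_measure (\<lambda>s. r s * cnj (?p s))"
    using norm_trig_poly_le by (intro integrable_L2_circle_mult_bounded[OF r]) auto
  have "(cmod (a + b))\<^sup>2 = (cmod a)\<^sup>2 + (cmod b)\<^sup>2 + 2 * Re (a * cnj b)" for a b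
    unfolding cmod_power2 by (simp add: power2_eq_square algebra_simps)
  then have "(\<integral>s. (cmod (r s + ?p s))\<^sup>2 \<partial>circle_measure)
      = (\<integral>s. (cmod (r s))\<^sup>2 + (cmod (?p s))\<^sup>2 + 2 * Re (r s * cnj (?p s)) \<partial>circle_measure)"
    by simp
  also have "\<dots> = (\<integral>s. (cmod (r s))\<^sup>2 \<partial>circle_measure) + (\<integral>s. (cmod (?p s))\<^sup>2 \<partial>circle_measure)
      + (\<integral>s. 2 * Re (r s * cnj (?p s)) \<partial>circle_measure)"
    using integrable_mult_right[OF integrable_Re[OF irp], of 2]
    by (simp only: Bochner_Integration.integral_add Bochner_Integration.integrable_add ir ip)
  also have "(\<integral>s. 2 * Re (r s * cnj (?p s)) \<partial>circle_measure)
      = 2 * Re (\<integral>s. r s * cnj (?p s) \<partial>circle_measure)"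
    by (simp only: integral_mult_right_zero integral_Re[OF irp])
  finally show ?thesis
    by (simp add: integral_mult_cnj_trig_poly_eq_0[OF r F orth])
qed

theorem fourier_sum_best_approximation:
  assumes u: "L2_circle u" and F: "F \<subseteq> {-int n..int n}"
  shows "circle_sqdist u (fourier_sum n u) \<le> circle_sqdist u (trig_poly F a)"
proof -
  let ?K = "{-int n..int n}"
  let ?d = "\<lambda>k. fourier_coeff u k - (if k \<in> F then a k else 0)"
  have "trig_poly ?K ?d s = fourier_sum n u s - trig_poly F a s" for s
    using trig_poly_extend[OF F, of a] trig_poly_diff[of ?K "fourier_coeff u" s]
    by (simp add: fourier_sum_def)
  then have "circle_sqdist u (trig_poly F a)
      = (\<integral>s. (cmod ((u s - fourier_sum n u s) + trig_poly ?K ?d s))\<^sup>2 \<partial>circle_measure)"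
    unfolding circle_sqdist_def by simp
  also have "\<dots> = circle_sqdist u (fourier_sum n u) + (\<integral>s. (cmod (trig_poly ?K ?d s))\<^sup>2 \<partial>circle_measure)"
    unfolding circle_sqdist_def
    by (rule integral_norm_add_trig_poly_orthogonal)
       (simp_all add: L2_circle_diff u L2_circle_fourier_sum fourier_remainder_orthogonal)
  finally show ?thesis
    by (simp add: integral_nonneg_AE)
qed

corollary bessel_inequality:
  "L2_circle u \<Longrightarrow> circle_sqdist u (fourier_sum n u) \<le> circle_sqdist u (\<lambda>s. 0)"
  using fourier_sum_best_approximation[of u "{}" n] by simp

section \<open>Density of trigonometric polynomials in \<open>L\<^sup>2\<close>\<close>

definition trig_approximable :: "(complex \<Rightarrow> complex) \<Rightarrow> bool" where
  "trig_approximable u \<longleftrightarrow> (\<forall>e>0. \<exists>F a. finite F \<and> circle_sqdist u (trig_poly F a) < e)"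

theorem fourier_sum_tendsto_if_trig_approximable:
  assumes u: "L2_circle u" and "trig_approximable u"
  shows "(\<lambda>n. circle_sqdist u (fourier_sum n u)) \<longlonglongrightarrow> 0"
proof (rule LIMSEQ_I)
  fix e :: real assume "0 < e"
  then obtain F a where "finite F" and Fa: "circle_sqdist u (trig_poly F a) < e"
    using assms(2) unfolding trig_approximable_def by blast
  then obtain m where "F \<subseteq> {-int m..int m}"
    using finite_int_subset_symmetric_interval by blast
  then have "circle_sqdist u (fourier_sum n u) < e" if "m \<le> n" for n
    using fourier_sum_best_approximation[OF u, of F n a] Fa that by force
  then show "\<exists>m. \<forall>n\<ge>m. norm (circle_sqdist u (fourier_sum n u) - 0) < e"
    using circle_sqdist_nonneg by auto
qed

lemma integral_power2_norm_add_le: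
  assumes "L2_circle u" "L2_circle v"
  shows "(\<integral>s. (cmod (u s + v s))\<^sup>2 \<partial>circle_measure)
       \<le> 2 * (\<integral>s. (cmod (u s))\<^sup>2 \<partial>circle_measure) + 2 * (\<integral>s. (cmod (v s))\<^sup>2 \<partial>circle_measure)"
proof -
  have "(\<integral>s. (cmod (u s + v s))\<^sup>2 \<partial>circle_measure)
      \<le> (\<integral>s. 2 * (cmod (u s))\<^sup>2 + 2 * (cmod (v s))\<^sup>2 \<partial>circle_measure)"
    using assms L2_circle_add[OF assms] unfolding L2_circle_def
    by (intro integral_mono) (simp_all add: power2_norm_add_le)
  also have "\<dots> = 2 * (\<integral>s. (cmod (u s))\<^sup>2 \<partial>circle_measure) + 2 * (\<integral>s. (cmod (v s))\<^sup>2 \<partial>circle_measure)"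
    using assms unfolding L2_circle_def by simp
  finally show ?thesis .
qed

lemma circle_sqdist_triangle:
  assumes "L2_circle u" "L2_circle v" "L2_circle w"
  shows "circle_sqdist u w \<le> 2 * circle_sqdist u v + 2 * circle_sqdist v w"
  using integral_power2_norm_add_le[of "\<lambda>s. u s - v s" "\<lambda>s. v s - w s"] assms
  unfolding circle_sqdist_def by (simp add: L2_circle_diff)

lemma circle_sqdist_add_le:
  assumes "L2_circle u" "L2_circle v" "L2_circle u'" "L2_circle v'"
  shows "circle_sqdist (\<lambda>s. u s + v s) (\<lambda>s. u' s + v' s) \<le> 2 * circle_sqdist u u' + 2 * circle_sqdist v v'"
  using integral_power2_norm_add_le[of "\<lambda>s. u s - u' s" "\<lambda>s. v s - v' s"] assms
  unfolding circle_sqdist_def by (simp add: L2_circle_diff algebra_simps)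

lemma circle_sqdist_cmult:
  "circle_sqdist (\<lambda>s. c * u s) (\<lambda>s. c * v s) = (cmod c)\<^sup>2 * circle_sqdist u v"
  unfolding circle_sqdist_def
  by (simp flip: right_diff_distrib add: norm_mult power_mult_distrib)

lemma trig_approximable_trig_poly: "finite F \<Longrightarrow> trig_approximable (trig_poly F a)"
  unfolding trig_approximable_def circle_sqdist_def by (auto intro!: exI[of _ F] exI[of _ a])

lemma trig_approximable_cong:
  assumes "trig_approximable u" "\<And>s. s \<in> unit_circle \<Longrightarrow> u s = v s"
  shows "trig_approximable v"
proof -
  have "circle_sqdist u w = circle_sqdist v w" for w
    unfolding circle_sqdist_def using assms(2) by (intro Bochner_Integration.integral_cong) auto
  then show ?thesis
    using assms(1) unfolding trig_approximable_def by simp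
qed

lemma trig_approximable_add:
  assumes u: "L2_circle u" "trig_approximable u" and v: "L2_circle v" "trig_approximable v"
  shows "trig_approximable (\<lambda>s. u s + v s)"
  unfolding trig_approximable_def
proof (intro allI impI)
  fix e :: real assume "0 < e"
  then obtain F a G b where F: "finite F" "circle_sqdist u (trig_poly F a) < e/4"
      and G: "finite G" "circle_sqdist v (trig_poly G b) < e/4"
    using u(2) v(2) unfolding trig_approximable_def by (meson zero_less_divide_iff zero_less_numeral)
  let ?c = "\<lambda>k. (if k \<in> F then a k else 0) + (if k \<in> G then b k else 0)"
  have "(\<lambda>s. trig_poly F a s + trig_poly G b s) = trig_poly (F \<union> G) ?c"
    using trig_poly_add[OF F(1) G(1)] by (simp add: fun_eq_iff)
  then have "circle_sqdist (\<lambda>s. u s + v s) (trig_poly (F \<union> G) ?c) < e"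
    using circle_sqdist_add_le[OF u(1) v(1) L2_circle_trig_poly L2_circle_trig_poly, of F a G b] F G
    by simp
  then show "\<exists>H c. finite H \<and> circle_sqdist (\<lambda>s. u s + v s) (trig_poly H c) < e"
    using F G by blast
qed

lemma trig_approximable_cmult:
  assumes "trig_approximable u"
  shows "trig_approximable (\<lambda>s. c * u s)"
  unfolding trig_approximable_def
proof (intro allI impI)
  fix e :: real assume "0 < e"
  then have "0 < e / ((cmod c)\<^sup>2 + 1)"
    by (intro divide_pos_pos add_nonneg_pos) auto
  then obtain F a where "finite F" and Fa: "circle_sqdist u (trig_poly F a) < e / ((cmod c)\<^sup>2 + 1)"
    using assms unfolding trig_approximable_def by blast
  have "(cmod c)\<^sup>2 * circle_sqdist u (trig_poly F a) \<le> (cmod c)\<^sup>2 * (e / ((cmod c)\<^sup>2 + 1))"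
    using Fa by (intro mult_left_mono) auto
  also have "\<dots> < e"
    using \<open>0 < e\<close> by (simp add: field_simps add_pos_nonneg)
  finally have "(cmod c)\<^sup>2 * circle_sqdist u (trig_poly F a) < e" .
  then show "\<exists>F a. finite F \<and> circle_sqdist (\<lambda>s. c * u s) (trig_poly F a) < e"
    using \<open>finite F\<close> circle_sqdist_cmult[of c u "trig_poly F a"]
    by (intro exI[of _ F] exI[of _ "\<lambda>k. c * a k"]) (simp add: trig_poly_cmult)
qed

lemma trig_approximable_sum:
  assumes "finite I" "\<And>i. i \<in> I \<Longrightarrow> L2_circle (u i) \<and> trig_approximable (u i)"
  shows "trig_approximable (\<lambda>s. \<Sum>i\<in>I. u i s)"
  using assms
proof (induction I rule: finite_induct)
  case empty
  then show ?case using trig_approximable_trig_poly[of "{}"] by simp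
next
  case (insert i I)
  then show ?case
    using trig_approximable_add[of "u i"] L2_circle_sum[of I u] by simp
qed

lemma trig_approximable_limit:
  assumes u: "L2_circle u" and v: "\<And>m. L2_circle (v m)" "\<And>m. trig_approximable (v m)"
    and lim: "(\<lambda>m. circle_sqdist u (v m)) \<longlonglongrightarrow> 0"
  shows "trig_approximable u"
  unfolding trig_approximable_def
proof (intro allI impI)
  fix e :: real assume "0 < e"
  then obtain m where "circle_sqdist u (v m) < e/4"
    using order_tendstoD(2)[OF lim, of "e/4"] by (auto simp: eventually_sequentially)
  moreover obtain F a where "finite F" "circle_sqdist (v m) (trig_poly F a) < e/4"
    using v(2) \<open>0 < e\<close> unfolding trig_approximable_def by (meson zero_less_divide_iff zero_less_numeral)
  ultimately show "\<exists>F a. finite F \<and> circle_sqdist u (trig_poly F a) < e"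
    using circle_sqdist_triangle[OF u v(1)[of m] L2_circle_trig_poly, of F a]
    by (intro exI[of _ F] exI[of _ a]) auto
qed

lemma trig_approximable_uniform_limit:
  assumes u: "L2_circle u"
    and unif: "\<And>e. e > 0 \<Longrightarrow> \<exists>F a. finite F \<and> (\<forall>s\<in>unit_circle. cmod (u s - trig_poly F a s) \<le> e)"
  shows "trig_approximable u"
  unfolding trig_approximable_def
proof (intro allI impI)
  fix e :: real assume "0 < e"
  define d where "d = sqrt (e / (4*pi))"
  have d: "0 < d" "d\<^sup>2 = e / (4*pi)"
    unfolding d_def using \<open>0 < e\<close> by auto
  obtain F a where "finite F" and Fa: "\<forall>s\<in>unit_circle. cmod (u s - trig_poly F a s) \<le> d"
    using unif[OF d(1)] by blast
  have "circle_sqdist u (trig_poly F a) \<le> (\<integral>s. d\<^sup>2 \<partial>circle_measure)"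
    unfolding circle_sqdist_def using Fa \<open>0 < d\<close>
    by (intro integral_mono_AE integrable_circle_sqdist u L2_circle_trig_poly AE_I2)
       (auto intro: power_mono)
  also have "\<dots> < e"
    using d \<open>0 < e\<close> by (simp add: measure_circle_measure field_simps)
  finally show "\<exists>F a. finite F \<and> circle_sqdist u (trig_poly F a) < e"
    using \<open>finite F\<close> by blast
qed

definition is_trig_poly :: "(complex \<Rightarrow> complex) \<Rightarrow> bool" where
  "is_trig_poly h \<longleftrightarrow> (\<exists>F a. finite F \<and> (\<forall>s\<in>unit_circle. h s = trig_poly F a s))"

lemma is_trig_poly_cong:
  "is_trig_poly f \<Longrightarrow> (\<And>s. s \<in> unit_circle \<Longrightarrow> f s = g s) \<Longrightarrow> is_trig_poly g"
  unfolding is_trig_poly_def by metis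

lemma is_trig_poly_monom: "is_trig_poly (\<lambda>s. c * s powi m)"
  unfolding is_trig_poly_def by (intro exI[of _ "{m}"] exI[of _ "\<lambda>_. c"]) (simp add: trig_poly_def)

lemma is_trig_poly_const: "is_trig_poly (\<lambda>s. c)"
  using is_trig_poly_monom[of c 0] by simp

lemma is_trig_poly_add:
  assumes "is_trig_poly f" "is_trig_poly g"
  shows "is_trig_poly (\<lambda>s. f s + g s)"
proof -
  obtain F a G b where "finite F" "\<forall>s\<in>unit_circle. f s = trig_poly F a s"
    and "finite G" "\<forall>s\<in>unit_circle. g s = trig_poly G b s"
    using assms unfolding is_trig_poly_def by blast
  with trig_poly_add[of F G a _ b] show ?thesis
    unfolding is_trig_poly_def by (intro exI[of _ "F \<union> G"]) auto
qed

lemma is_trig_poly_sum: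
  "finite I \<Longrightarrow> (\<And>i. i \<in> I \<Longrightarrow> is_trig_poly (f i)) \<Longrightarrow> is_trig_poly (\<lambda>s. \<Sum>i\<in>I. f i s)"
  by (induction I rule: finite_induct) (simp_all add: is_trig_poly_const is_trig_poly_add)

lemma is_trig_poly_mult:
  assumes "is_trig_poly f" "is_trig_poly g"
  shows "is_trig_poly (\<lambda>s. f s * g s)"
proof -
  obtain F a G b where F: "finite F" "\<forall>s\<in>unit_circle. f s = trig_poly F a s"
    and G: "finite G" "\<forall>s\<in>unit_circle. g s = trig_poly G b s"
    using assms unfolding is_trig_poly_def by blast
  have "is_trig_poly (\<lambda>s. \<Sum>j\<in>F. \<Sum>k\<in>G. (a j * b k) * s powi (j + k))"
    using F(1) G(1) by (intro is_trig_poly_sum is_trig_poly_monom)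
  then show ?thesis
  proof (rule is_trig_poly_cong)
    fix s assume s: "s \<in> unit_circle"
    have "f s * g s = (\<Sum>j\<in>F. \<Sum>k\<in>G. (a j * b k) * (s powi j * s powi k))"
      using F(2) G(2) s by (simp add: trig_poly_def sum_product ac_simps)
    then show "(\<Sum>j\<in>F. \<Sum>k\<in>G. (a j * b k) * s powi (j + k)) = f s * g s"
      using s by (simp add: power_int_add_unit_circle)
  qed
qed

lemma is_trig_poly_Re: "is_trig_poly (\<lambda>s. complex_of_real (Re s))"
proof (rule is_trig_poly_cong[OF is_trig_poly_add[OF is_trig_poly_monom is_trig_poly_monom]])
  fix s assume "s \<in> unit_circle"
  then show "1/2 * s powi 1 + 1/2 * s powi (-1) = complex_of_real (Re s)"
    using complex_add_cnj[of s] by (simp add: cnj_unit_circle power_int_minus field_simps)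
qed

lemma is_trig_poly_Im: "is_trig_poly (\<lambda>s. complex_of_real (Im s))"
proof (rule is_trig_poly_cong[OF is_trig_poly_add[OF is_trig_poly_monom is_trig_poly_monom]])
  fix s assume "s \<in> unit_circle"
  then show "1/(2*\<i>) * s powi 1 + (-1/(2*\<i>)) * s powi (-1) = complex_of_real (Im s)"
    using complex_diff_cnj[of s] by (simp add: cnj_unit_circle power_int_minus field_simps)
qed

lemma is_trig_poly_real_polynomial_function:
  "real_polynomial_function q \<Longrightarrow> is_trig_poly (\<lambda>s. complex_of_real (q s))"
proof (induction rule: real_polynomial_function.induct)
  case (linear q)
  have "is_trig_poly (\<lambda>s. complex_of_real (Re s) * q 1 + complex_of_real (Im s) * q \<i>)"
    by (intro is_trig_poly_add is_trig_poly_mult is_trig_poly_Re is_trig_poly_Im is_trig_poly_const)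
  then show ?case
  proof (rule is_trig_poly_cong)
    fix s
    show "complex_of_real (Re s) * q 1 + complex_of_real (Im s) * q \<i> = complex_of_real (q s)"
      using bounded_linear_complex_to_real[OF linear, of s] by simp
  qed
qed (simp_all add: is_trig_poly_const is_trig_poly_add is_trig_poly_mult)

lemma uniform_trig_approx_continuous_on:
  assumes g: "continuous_on unit_circle g" and "e > 0"
  shows "\<exists>F a. finite F \<and> (\<forall>s\<in>unit_circle. cmod (g s - trig_poly F a s) \<le> e)"
proof -
  have "continuous_on unit_circle (\<lambda>s. Re (g s))" "continuous_on unit_circle (\<lambda>s. Im (g s))"
    using g by (auto intro: continuous_intros)
  note approx = Stone_Weierstrass_real_polynomial_function[OF compact_sphere _ half_gt_zero[OF \<open>e > 0\<close>]]
  obtain q1 where q1: "real_polynomial_function q1" "\<And>s. s \<in> unit_circle \<Longrightarrow> \<bar>Re (g s) - q1 s\<bar> < e/2"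
    using approx[OF \<open>continuous_on unit_circle (\<lambda>s. Re (g s))\<close>] by blast
  obtain q2 where q2: "real_polynomial_function q2" "\<And>s. s \<in> unit_circle \<Longrightarrow> \<bar>Im (g s) - q2 s\<bar> < e/2"
    using approx[OF \<open>continuous_on unit_circle (\<lambda>s. Im (g s))\<close>] by blast
  have "is_trig_poly (\<lambda>s. complex_of_real (q1 s) + \<i> * complex_of_real (q2 s))"
    using q1(1) q2(1) by (intro is_trig_poly_add is_trig_poly_mult is_trig_poly_const is_trig_poly_real_polynomial_function)
  then obtain F a where F: "finite F"
    and Fa: "\<forall>s\<in>unit_circle. complex_of_real (q1 s) + \<i> * complex_of_real (q2 s) = trig_poly F a s"
    unfolding is_trig_poly_def by blast
  have "cmod (g s - trig_poly F a s) \<le> e" if "s \<in> unit_circle" for s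
  proof -
    have "trig_poly F a s = complex_of_real (q1 s) + \<i> * complex_of_real (q2 s)"
      using Fa that by simp
    then have "\<bar>Re (g s - trig_poly F a s)\<bar> < e/2" "\<bar>Im (g s - trig_poly F a s)\<bar> < e/2"
      using q1(2)[OF that] q2(2)[OF that] by simp_all
    then show ?thesis
      using cmod_le[of "g s - trig_poly F a s"] by linarith
  qed
  with F show ?thesis by blast
qed

lemma trig_approximable_continuous_on:
  assumes g: "continuous_on unit_circle g"
  shows "L2_circle g \<and> trig_approximable g"
proof -
  obtain B where "\<And>s. s \<in> unit_circle \<Longrightarrow> cmod (g s) \<le> B"
    using compact_imp_bounded[OF compact_continuous_image[OF g compact_sphere]]
    unfolding bounded_iff by blast
  then have L2: "L2_circle g"
    by (intro L2_circle_bounded borel_measurable_circle_measure_continuous_on g)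
  with trig_approximable_uniform_limit[OF L2 uniform_trig_approx_continuous_on[OF g]]
  show ?thesis by blast
qed

lemma L2_circle_const: "L2_circle (\<lambda>s. c)"
  by (rule L2_circle_bounded[where B="cmod c"]) simp_all

lemma trig_approximable_const: "trig_approximable (\<lambda>s. c)"
proof -
  have "trig_poly {0} (\<lambda>_. c) = (\<lambda>s. c)"
    by (simp add: trig_poly_def fun_eq_iff)
  then show ?thesis
    using trig_approximable_trig_poly[of "{0}" "\<lambda>_. c"] by simp
qed

lemma borel_measurable_circle_measure_indicator:
  "B \<in> sets borel \<Longrightarrow> (\<lambda>s. indicator B s :: complex) \<in> borel_measurable circle_measure"
  unfolding measurable_circle_measure_eq by (intro measurable_restrict_space1 borel_measurable_indicator)

lemma L2_circle_indicator: "B \<in> sets borel \<Longrightarrow> L2_circle (\<lambda>s. indicator B s :: complex)"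
  by (rule L2_circle_bounded[OF borel_measurable_circle_measure_indicator, of B 1]) (auto simp: indicator_def)

lemma circle_sqdist_dominated_convergence:
  assumes [measurable]: "u \<in> borel_measurable circle_measure" "\<And>m. v m \<in> borel_measurable circle_measure"
    and lim: "\<And>s. s \<in> unit_circle \<Longrightarrow> (\<lambda>m. v m s) \<longlonglongrightarrow> u s"
    and bound: "\<And>m s. s \<in> unit_circle \<Longrightarrow> (cmod (u s - v m s))\<^sup>2 \<le> w s"
    and w: "integrable circle_measure w"
  shows "(\<lambda>m. circle_sqdist u (v m)) \<longlonglongrightarrow> 0"
proof -
  have "(\<lambda>m. (cmod (u s - v m s))\<^sup>2) \<longlonglongrightarrow> (cmod (u s - u s))\<^sup>2" if "s \<in> unit_circle" for s
    by (intro tendsto_power tendsto_norm tendsto_diff tendsto_const lim that)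
  then have "(\<lambda>m. circle_sqdist u (v m)) \<longlonglongrightarrow> (\<integral>s. 0 \<partial>circle_measure)"
    unfolding circle_sqdist_def using bound
    by (intro integral_dominated_convergence[OF _ _ w] AE_I2) auto
  then show ?thesis by simp
qed

lemma trig_approximable_indicator_open:
  assumes "open U"
  shows "trig_approximable (\<lambda>s. indicator U s :: complex)"
proof (cases "U = UNIV")
  case True
  then show ?thesis using trig_approximable_const[of 1] by simp
next
  case False
  define v where "v m s = complex_of_real (min 1 (real m * infdist s (- U)))" for m s
  have cont: "continuous_on unit_circle (v m)" for m
    unfolding v_def by (intro continuous_intros)
  have bound: "(cmod (indicator U s - v m s))\<^sup>2 \<le> 1" for m s
  proof -
    have "0 \<le> real m * infdist s (- U)"
      by (simp add: infdist_nonneg)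
    then have "\<bar>indicator U s - min 1 (real m * infdist s (- U))\<bar> \<le> (1::real)"
      by (simp add: indicator_def)
    moreover have "indicator U s - v m s = of_real (indicator U s - min 1 (real m * infdist s (- U)))"
      by (simp add: v_def of_real_indicator)
    ultimately show ?thesis
      by (metis abs_ge_zero norm_of_real power_le_one)
  qed
  have lim: "(\<lambda>m. v m s) \<longlonglongrightarrow> indicator U s" for s
  proof -
    have "(\<lambda>m. v m s) \<longlonglongrightarrow> of_real (indicator (- (- U)) s)"
      unfolding v_def using assms False by (intro tendsto_of_real LIMSEQ_min_infdist_indicator) auto
    then show ?thesis
      by (simp add: of_real_indicator)
  qed
  have U: "U \<in> sets borel"
    using assms by simp
  show ?thesis
  proof (rule trig_approximable_limit[OF L2_circle_indicator[OF U]])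
    show "L2_circle (v m)" "trig_approximable (v m)" for m
      using trig_approximable_continuous_on[OF cont] by auto
    show "(\<lambda>m. circle_sqdist (\<lambda>s. indicator U s) (v m)) \<longlonglongrightarrow> 0"
      by (rule circle_sqdist_dominated_convergence[where w="\<lambda>_. 1"])
         (simp_all add: lim bound borel_measurable_circle_measure_indicator[OF U]
           borel_measurable_circle_measure_continuous_on[OF cont])
  qed
qed

lemma trig_approximable_indicator_disjoint_UN:
  fixes A :: "nat \<Rightarrow> complex set"
  assumes "disjoint_family A" and A: "\<And>i. A i \<in> sets borel"
    and approx: "\<And>i. trig_approximable (\<lambda>s. indicator (A i) s :: complex)"
  shows "trig_approximable (\<lambda>s. indicator (\<Union>i. A i) s :: complex)"
proof -
  define v where "v m s = (\<Sum>i<m. indicator (A i) s :: complex)" for m s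
  have v: "v m = (\<lambda>s. indicator (\<Union>i<m. A i) s)" for m
    using assms(1) unfolding v_def
    by (intro ext indicator_UN_disjoint[symmetric]) (auto simp: disjoint_family_on_def)
  show ?thesis
  proof (rule trig_approximable_limit[OF L2_circle_indicator])
    show "(\<Union>i. A i) \<in> sets borel"
      using A by blast
    show "L2_circle (v m)" for m
      unfolding v_def using A by (intro L2_circle_sum L2_circle_indicator) auto
    show "trig_approximable (v m)" for m
      unfolding v_def using A approx by (intro trig_approximable_sum) (auto intro: L2_circle_indicator)
    show "(\<lambda>m. circle_sqdist (\<lambda>s. indicator (\<Union>i. A i) s) (v m)) \<longlonglongrightarrow> 0"
      using A unfolding v
      by (intro circle_sqdist_dominated_convergence[where w="\<lambda>_. 1"] borel_measurable_circle_measure_indicator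
          LIMSEQ_indicator_UN sets.countable_UN) (auto simp: indicator_def)
  qed
qed

lemma trig_approximable_indicator_borel:
  assumes "B \<in> sets borel"
  shows "trig_approximable (\<lambda>s. indicator B s :: complex)"
proof -
  have "Int_stable {S::complex set. open S}"
    by (auto simp: Int_stable_def)
  moreover have "{S::complex set. open S} \<subseteq> Pow UNIV"
    by simp
  moreover have "B \<in> sigma_sets UNIV {S. open S}"
    using assms by (simp add: sets_borel)
  ultimately show ?thesis
  proof (induction rule: sigma_sets_induct_disjoint)
    case (basic A)
    then show ?case by (simp add: trig_approximable_indicator_open)
  next
    case empty
    then show ?case using trig_approximable_const[of 0] by simp
  next
    case (compl A)
    have "A \<in> sets borel"
      using compl(1) by (simp add: sets_borel)
    then have "trig_approximable (\<lambda>s. 1 + (-1) * indicator A s)"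
      using compl(2) by (intro trig_approximable_add trig_approximable_cmult L2_circle_cmult
          L2_circle_indicator L2_circle_const trig_approximable_const)
    then show ?case
      by (rule trig_approximable_cong) (simp add: indicator_def)
  next
    case (union A)
    then show ?case
      by (intro trig_approximable_indicator_disjoint_UN) (auto simp: sets_borel)
  qed
qed

lemma trig_approximable_indicator:
  assumes "A \<in> sets circle_measure"
  shows "trig_approximable (\<lambda>s. indicator A s :: complex)"
proof -
  have "A \<in> sets (restrict_space borel unit_circle)"
    using assms sets_circle_measure by simp
  then obtain B where "B \<in> sets borel" "A = unit_circle \<inter> B"
    unfolding sets_restrict_space by blast
  then show ?thesis
    by (intro trig_approximable_cong[OF trig_approximable_indicator_borel]) (auto simp: indicator_def)
qed

lemma L2_circle_simple_function:
  assumes "simple_function circle_measure g"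
  shows "L2_circle g"
proof (rule L2_circle_bounded)
  show "g \<in> borel_measurable circle_measure"
    using assms by (rule borel_measurable_simple_function)
  show "cmod (g s) \<le> Max (norm ` g ` unit_circle)" if "s \<in> unit_circle" for s
    using simple_functionD(1)[OF assms] that by (intro Max_ge) auto
qed

lemma trig_approximable_simple_function:
  assumes g: "simple_function circle_measure g"
  shows "trig_approximable g"
proof -
  have A: "g -` {y} \<inter> unit_circle \<in> sets circle_measure" for y
    using simple_functionD(2)[OF g] by simp
  have "trig_approximable (\<lambda>s. \<Sum>y\<in>g ` unit_circle. y * indicator (g -` {y} \<inter> unit_circle) s)"
  proof (intro trig_approximable_sum conjI)
    show "finite (g ` unit_circle)"
      using simple_functionD(1)[OF g] by simp
    show "L2_circle (\<lambda>s. y * indicator (g -` {y} \<inter> unit_circle) s)" for y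
      by (intro L2_circle_cmult L2_circle_bounded[where B=1] borel_measurable_indicator A)
         (simp add: indicator_def)
    show "trig_approximable (\<lambda>s. y * indicator (g -` {y} \<inter> unit_circle) s)" for y
      using A by (intro trig_approximable_cmult trig_approximable_indicator)
  qed
  then show ?thesis
  proof (rule trig_approximable_cong)
    fix s assume "s \<in> unit_circle"
    then have "g s = (\<Sum>y\<in>g ` unit_circle. indicator (g -` {y} \<inter> unit_circle) s *\<^sub>R y)"
      by (rule simple_function_indicator_representation_banach[OF g, unfolded space_circle_measure])
    also have "\<dots> = (\<Sum>y\<in>g ` unit_circle. y * indicator (g -` {y} \<inter> unit_circle) s)"
      by (intro sum.cong refl) (simp add: scaleR_conv_of_real indicator_def)
    finally show "(\<Sum>y\<in>g ` unit_circle. y * indicator (g -` {y} \<inter> unit_circle) s) = g s"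
      by (rule sym)
  qed
qed

theorem trig_approximable_L2_circle:
  assumes u: "L2_circle u"
  shows "trig_approximable u"
proof -
  have um: "u \<in> borel_measurable circle_measure"
    and "integrable circle_measure (\<lambda>s. (cmod (u s))\<^sup>2)"
    using u unfolding L2_circle_def by auto
  obtain v where v: "\<And>m. simple_function circle_measure (v m)"
    and lim: "\<And>s. s \<in> space circle_measure \<Longrightarrow> (\<lambda>m. v m s) \<longlonglongrightarrow> u s"
    and le: "\<And>m s. s \<in> space circle_measure \<Longrightarrow> dist (v m s) 0 \<le> 2 * dist (u s) 0"
    using borel_measurable_implies_sequence_metric[OF um, of 0] by blast
  have "(cmod (u s - v m s))\<^sup>2 \<le> 9 * (cmod (u s))\<^sup>2" if "s \<in> unit_circle" for m s
  proof -
    have "cmod (u s - v m s) \<le> 3 * cmod (u s)"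
      using le[of s m] that norm_triangle_ineq4[of "u s" "v m s"] by simp
    then have "(cmod (u s - v m s))\<^sup>2 \<le> (3 * cmod (u s))\<^sup>2"
      by (intro power_mono) auto
    then show ?thesis
      by (simp add: power_mult_distrib)
  qed
  then have "(\<lambda>m. circle_sqdist u (v m)) \<longlonglongrightarrow> 0"
    using lim v \<open>integrable circle_measure (\<lambda>s. (cmod (u s))\<^sup>2)\<close>
    by (intro circle_sqdist_dominated_convergence[where w="\<lambda>s. 9 * (cmod (u s))\<^sup>2"] um
        borel_measurable_simple_function) auto
  with v show ?thesis
    by (intro trig_approximable_limit[OF u] L2_circle_simple_function trig_approximable_simple_function)
qed

theorem fourier_sum_tendsto_L2:
  "L2_circle u \<Longrightarrow> (\<lambda>n. circle_sqdist u (fourier_sum n u)) \<longlonglongrightarrow> 0"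
  by (intro fourier_sum_tendsto_if_trig_approximable trig_approximable_L2_circle)

lemma nn_integral_circle_sqdist:
  assumes "L2_circle u" "L2_circle v"
  shows "(\<integral>\<^sup>+ s. ennreal ((cmod (u s - v s))\<^sup>2) \<partial>circle_measure) = ennreal (circle_sqdist u v)"
  unfolding circle_sqdist_def using integrable_circle_sqdist[OF assms]
  by (intro nn_integral_eq_integral) auto

lemma L2_circle_iff_nn_integral:
  "u \<in> borel_measurable circle_measure \<Longrightarrow>
     L2_circle u \<longleftrightarrow> (\<integral>\<^sup>+ s. ennreal ((cmod (u s))\<^sup>2) \<partial>circle_measure) < \<infinity>"
  unfolding L2_circle_def by (simp add: integrable_iff_bounded)

lemma nn_integral_fourier_sum_le:
  assumes "L2_circle u"
  shows "(\<integral>\<^sup>+ s. ennreal ((cmod (u s - fourier_sum n u s))\<^sup>2) \<partial>circle_measure)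
       \<le> (\<integral>\<^sup>+ s. ennreal ((cmod (u s))\<^sup>2) \<partial>circle_measure)"
  using bessel_inequality[OF assms, of n] nn_integral_circle_sqdist[OF assms L2_circle_const[of 0]]
  by (simp add: nn_integral_circle_sqdist[OF assms L2_circle_fourier_sum] ennreal_leI)

lemma nn_integral_fourier_sum_tendsto:
  assumes "L2_circle u"
  shows "(\<lambda>n. \<integral>\<^sup>+ s. ennreal ((cmod (u s - fourier_sum n u s))\<^sup>2) \<partial>circle_measure) \<longlonglongrightarrow> 0"
  unfolding nn_integral_circle_sqdist[OF assms L2_circle_fourier_sum]
  using tendsto_ennrealI[OF fourier_sum_tendsto_L2[OF assms]] by simp

section \<open>Fourier sums in the first variable on a torus\<close>

interpretation circle_product: product_sigma_finite "\<lambda>_::nat. circle_measure"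
  by standard

lemma Lp_mem_2_iff:
  "Lp_mem 2 M g \<longleftrightarrow> g \<in> borel_measurable M \<and> (\<integral>\<^sup>+ x. ennreal ((norm (g x))\<^sup>2) \<partial>M) < \<infinity>"
  by (simp add: Lp_mem_def)

lemma Lp_conv_2_iff:
  "Lp_conv 2 M fs g \<longleftrightarrow> (\<lambda>n. \<integral>\<^sup>+ x. ennreal ((norm (fs n x - g x))\<^sup>2) \<partial>M) \<longlonglongrightarrow> 0"
  by (simp add: Lp_conv_def)

lemma Lp_mem_2_if_nn_integral_diff_finite:
  assumes g: "Lp_mem 2 M g" and [measurable]: "h \<in> borel_measurable M"
    and hg: "(\<integral>\<^sup>+ x. ennreal ((norm (h x - g x))\<^sup>2) \<partial>M) < \<infinity>"
  shows "Lp_mem 2 M h"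
proof -
  have [measurable]: "g \<in> borel_measurable M"
    using g by (simp add: Lp_mem_2_iff)
  have "ennreal ((norm (h x))\<^sup>2) \<le> 2 * ennreal ((norm (h x - g x))\<^sup>2) + 2 * ennreal ((norm (g x))\<^sup>2)" for x
  proof -
    have "ennreal ((norm (h x))\<^sup>2) \<le> ennreal (2 * (norm (h x - g x))\<^sup>2 + 2 * (norm (g x))\<^sup>2)"
      using power2_norm_add_le[of "h x - g x" "g x"] by (intro ennreal_leI) simp
    then show ?thesis
      by (simp add: ennreal_plus ennreal_mult)
  qed
  then have "(\<integral>\<^sup>+ x. ennreal ((norm (h x))\<^sup>2) \<partial>M)
      \<le> (\<integral>\<^sup>+ x. 2 * ennreal ((norm (h x - g x))\<^sup>2) + 2 * ennreal ((norm (g x))\<^sup>2) \<partial>M)"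
    by (intro nn_integral_mono) simp
  also have "\<dots> = 2 * (\<integral>\<^sup>+ x. ennreal ((norm (h x - g x))\<^sup>2) \<partial>M) + 2 * (\<integral>\<^sup>+ x. ennreal ((norm (g x))\<^sup>2) \<partial>M)"
    by (simp add: nn_integral_add nn_integral_cmult)
  also have "\<dots> < \<infinity>"
    using hg g by (simp add: Lp_mem_2_iff ennreal_mult_less_top)
  finally show ?thesis
    by (simp add: Lp_mem_2_iff)
qed

lemma nn_integral_torus_on_insert:
  assumes "finite J" "i \<notin> J" "F \<in> borel_measurable (torus_on (insert i J))"
  shows "(\<integral>\<^sup>+ x. F x \<partial>torus_on (insert i J))
       = (\<integral>\<^sup>+ t. (\<integral>\<^sup>+ s. F (t(i := s)) \<partial>circle_measure) \<partial>torus_on J)"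
  using assms unfolding torus_on_def by (rule circle_product.product_nn_integral_insert)

lemma borel_measurable_torus_on_fiber_nn_integral:
  assumes "F \<in> borel_measurable (torus_on (insert i J))"
  shows "(\<lambda>t. \<integral>\<^sup>+ s. F (t(i := s)) \<partial>circle_measure) \<in> borel_measurable (torus_on J)"
proof -
  have "(\<lambda>x. F ((fst x)(i := snd x))) \<in> borel_measurable (torus_on J \<Otimes>\<^sub>M circle_measure)"
    using measurable_compose[OF measurable_add_dim assms[unfolded torus_on_def]]
    unfolding torus_on_def by (simp add: split_beta')
  then show ?thesis
    by (intro circle.borel_measurable_nn_integral) (simp add: split_beta')
qed

lemma borel_measurable_torus_on_fiber:
  assumes "t \<in> space (torus_on J)" "i \<notin> J" "g \<in> borel_measurable (torus_on (insert i J))"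
  shows "(\<lambda>s. g (t(i := s))) \<in> borel_measurable circle_measure"
  using measurable_compose[OF measurable_component_update[OF assms(1)[unfolded torus_on_def] assms(2)]
      assms(3)[unfolded torus_on_def]] .

lemma tendsto_nn_integral_torus_on_insert:
  assumes J: "finite J" "i \<notin> J"
    and F: "\<And>n. F n \<in> borel_measurable (torus_on (insert i J))"
    and G: "G \<in> borel_measurable (torus_on (insert i J))"
    and G_fin: "(\<integral>\<^sup>+ x. G x \<partial>torus_on (insert i J)) < \<infinity>"
    and bound: "\<And>n t. t \<in> space (torus_on J) \<Longrightarrow>
      (\<integral>\<^sup>+ s. F n (t(i := s)) \<partial>circle_measure) \<le> (\<integral>\<^sup>+ s. G (t(i := s)) \<partial>circle_measure)"
    and lim: "\<And>t. t \<in> space (torus_on J) \<Longrightarrow> (\<integral>\<^sup>+ s. G (t(i := s)) \<partial>circle_measure) < \<infinity> \<Longrightarrow>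
      (\<lambda>n. \<integral>\<^sup>+ s. F n (t(i := s)) \<partial>circle_measure) \<longlonglongrightarrow> 0"
  shows "(\<lambda>n. \<integral>\<^sup>+ x. F n x \<partial>torus_on (insert i J)) \<longlonglongrightarrow> 0"
proof -
  let ?G = "\<lambda>t. \<integral>\<^sup>+ s. G (t(i := s)) \<partial>circle_measure"
  have "AE t in torus_on J. ?G t \<noteq> \<infinity>"
    using G_fin by (intro nn_integral_PInf_AE borel_measurable_torus_on_fiber_nn_integral G)
      (simp add: nn_integral_torus_on_insert[OF J G])
  then have "AE t in torus_on J. (\<lambda>n. \<integral>\<^sup>+ s. F n (t(i := s)) \<partial>circle_measure) \<longlonglongrightarrow> 0"
    using AE_space by eventually_elim (simp add: lim less_top)
  then have "(\<lambda>n. \<integral>\<^sup>+ t. (\<integral>\<^sup>+ s. F n (t(i := s)) \<partial>circle_measure) \<partial>torus_on J) \<longlonglongrightarrow> (\<integral>\<^sup>+ t. 0 \<partial>torus_on J)"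
    using bound G_fin
    by (intro nn_integral_dominated_convergence[where w="?G"] borel_measurable_torus_on_fiber_nn_integral F G)
       (auto intro: AE_I2 simp: nn_integral_torus_on_insert[OF J G])
  then show ?thesis
    by (simp add: nn_integral_torus_on_insert[OF J F])
qed

lemma sum_C1_fun_upd_eq_fourier_sum:
  "(\<Sum>k\<in>{-int n..int n}. ((t(1 := s)) 1) powi k * C1 k g (t(1 := s))) = fourier_sum n (\<lambda>s. g (t(1 := s))) s"
  unfolding C1_def fourier_sum_def trig_poly_def fourier_coeff_def by (simp add: mult.commute)

lemma borel_measurable_C1:
  assumes "1 \<in> I" "g \<in> borel_measurable (torus_on I)"
  shows "C1 k g \<in> borel_measurable (torus_on I)"
proof -
  have "(\<lambda>x. (fst x)(1 := snd x)) \<in> measurable (torus_on I \<Otimes>\<^sub>M circle_measure) (torus_on I)"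
    unfolding torus_on_def by (rule measurable_fun_upd[where J=I]) (use assms(1) in auto)
  then have "(\<lambda>x. g ((fst x)(1 := snd x)) * snd x powi (-k)) \<in> borel_measurable (torus_on I \<Otimes>\<^sub>M circle_measure)"
    using measurable_compose[OF _ assms(2)] by measurable
  then have "(\<lambda>t. \<integral>s. g (t(1 := s)) * s powi (-k) \<partial>circle_measure) \<in> borel_measurable (torus_on I)"
    by (intro circle.borel_measurable_lebesgue_integral) (simp add: split_beta')
  then show ?thesis
    unfolding C1_def by measurable
qed

lemma borel_measurable_fourier_sum_first_variable:
  assumes "1 \<in> I" "g \<in> borel_measurable (torus_on I)"
  shows "(\<lambda>t. \<Sum>k\<in>{-int n..int n}. (t 1) powi k * C1 k g t) \<in> borel_measurable (torus_on I)"
proof -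
  have "(\<lambda>t. t 1) \<in> measurable (torus_on I) circle_measure"
    unfolding torus_on_def using assms(1) by (rule measurable_component_singleton)
  then show ?thesis
    using borel_measurable_C1[OF assms] by measurable
qed

lemma L2_circle_torus_on_fiber:
  assumes "t \<in> space (torus_on J)" "i \<notin> J" "g \<in> borel_measurable (torus_on (insert i J))"
    and "(\<integral>\<^sup>+ s. ennreal ((norm (g (t(i := s))))\<^sup>2) \<partial>circle_measure) < \<infinity>"
  shows "L2_circle (\<lambda>s. g (t(i := s)))"
  using assms(4) by (simp add: L2_circle_iff_nn_integral[OF borel_measurable_torus_on_fiber[OF assms(1-3)]])

lemma Lp_conv_fourier_sum_first_variable:
  fixes g :: "(nat \<Rightarrow> complex) \<Rightarrow> complex" and h :: "nat \<Rightarrow> (nat \<Rightarrow> complex) \<Rightarrow> complex"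
  assumes I: "finite I" "1 \<in> I" and g: "Lp_mem 2 (torus_on I) g"
    and h: "\<And>n t. t \<in> space (torus_on I) \<Longrightarrow> h n t = (\<Sum>k\<in>{-int n..int n}. (t 1) powi k * C1 k g t)"
  shows "(\<forall>n. Lp_mem 2 (torus_on I) (h n)) \<and> Lp_conv 2 (torus_on I) h g"
proof -
  define J where "J = I - {1}"
  have IJ: "finite J" "1 \<notin> J" and I_eq: "I = insert 1 J"
    using I unfolding J_def by auto
  have gm [measurable]: "g \<in> borel_measurable (torus_on I)"
    and gL: "(\<integral>\<^sup>+ x. ennreal ((norm (g x))\<^sup>2) \<partial>torus_on I) < \<infinity>"
    using g by (simp_all add: Lp_mem_2_iff)
  note gm' = gm[unfolded I_eq]
  have hm [measurable]: "h n \<in> borel_measurable (torus_on I)" for n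
    using borel_measurable_fourier_sum_first_variable[OF I(2) gm]
    by (rule measurable_cong[THEN iffD1, rotated]) (simp add: h)
  have F_meas: "(\<lambda>x. ennreal ((norm (h n x - g x))\<^sup>2)) \<in> borel_measurable (torus_on (insert 1 J))"
    and G_meas: "(\<lambda>x. ennreal ((norm (g x))\<^sup>2)) \<in> borel_measurable (torus_on (insert 1 J))" for n
    unfolding I_eq[symmetric] by measurable
  let ?u = "\<lambda>t s. g (t(1 := s))"
  have fiber_diff: "(\<integral>\<^sup>+ s. ennreal ((norm (h n (t(1 := s)) - g (t(1 := s))))\<^sup>2) \<partial>circle_measure)
      = (\<integral>\<^sup>+ s. ennreal ((cmod (?u t s - fourier_sum n (?u t) s))\<^sup>2) \<partial>circle_measure)"
    if "t \<in> space (torus_on J)" for n t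
  proof (intro nn_integral_cong)
    fix s assume "s \<in> space circle_measure"
    then have t_s: "t(1 := s) \<in> space (torus_on I)"
      using that unfolding torus_on_def I_eq by (simp add: space_PiM PiE_fun_upd)
    show "ennreal ((norm (h n (t(1 := s)) - g (t(1 := s))))\<^sup>2)
        = ennreal ((cmod (?u t s - fourier_sum n (?u t) s))\<^sup>2)"
      unfolding h[OF t_s] sum_C1_fun_upd_eq_fourier_sum by (simp add: norm_minus_commute)
  qed
  have bound: "(\<integral>\<^sup>+ s. ennreal ((norm (h n (t(1 := s)) - g (t(1 := s))))\<^sup>2) \<partial>circle_measure)
      \<le> (\<integral>\<^sup>+ s. ennreal ((norm (g (t(1 := s))))\<^sup>2) \<partial>circle_measure)" if "t \<in> space (torus_on J)" for n t
  proof (cases "(\<integral>\<^sup>+ s. ennreal ((norm (g (t(1 := s))))\<^sup>2) \<partial>circle_measure) < \<infinity>")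
    case True
    show ?thesis
      unfolding fiber_diff[OF that]
      by (rule nn_integral_fourier_sum_le[OF L2_circle_torus_on_fiber[OF that IJ(2) gm' True]])
  qed (simp add: less_top[symmetric])
  have "(\<lambda>n. \<integral>\<^sup>+ x. ennreal ((norm (h n x - g x))\<^sup>2) \<partial>torus_on (insert 1 J)) \<longlonglongrightarrow> 0"
  proof (rule tendsto_nn_integral_torus_on_insert[OF IJ F_meas G_meas _ bound])
    show "(\<integral>\<^sup>+ x. ennreal ((norm (g x))\<^sup>2) \<partial>torus_on (insert 1 J)) < \<infinity>"
      using gL unfolding I_eq .
    show "(\<lambda>n. \<integral>\<^sup>+ s. ennreal ((norm (h n (t(1 := s)) - g (t(1 := s))))\<^sup>2) \<partial>circle_measure) \<longlonglongrightarrow> 0"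
      if "t \<in> space (torus_on J)" "(\<integral>\<^sup>+ s. ennreal ((norm (g (t(1 := s))))\<^sup>2) \<partial>circle_measure) < \<infinity>" for t
      unfolding fiber_diff[OF that(1)]
      by (rule nn_integral_fourier_sum_tendsto[OF L2_circle_torus_on_fiber[OF that(1) IJ(2) gm' that(2)]])
  qed
  then have "Lp_conv 2 (torus_on I) h g"
    by (simp add: Lp_conv_2_iff I_eq)
  moreover have "Lp_mem 2 (torus_on I) (h n)" for n
  proof (rule Lp_mem_2_if_nn_integral_diff_finite[OF g hm])
    have "(\<integral>\<^sup>+ x. ennreal ((norm (h n x - g x))\<^sup>2) \<partial>torus_on I) \<le> (\<integral>\<^sup>+ x. ennreal ((norm (g x))\<^sup>2) \<partial>torus_on I)"
      unfolding I_eq nn_integral_torus_on_insert[OF IJ F_meas] nn_integral_torus_on_insert[OF IJ G_meas]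
      by (intro nn_integral_mono bound)
    with gL show "(\<integral>\<^sup>+ x. ennreal ((norm (h n x - g x))\<^sup>2) \<partial>torus_on I) < \<infinity>"
      by simp
  qed
  ultimately show ?thesis
    by blast
qed

lemma AE_Lp_mem_2_merge:
  assumes IK: "I \<inter> K = {}" "finite I" "finite K" and f: "Lp_mem 2 (torus_on (I \<union> K)) f"
  shows "AE y in torus_on K. Lp_mem 2 (torus_on I) (\<lambda>x. f (merge I K (x, y)))"
proof -
  interpret I: finite_product_sigma_finite "\<lambda>_::nat. circle_measure" I
    by standard (use IK in auto)
  have fm: "f \<in> borel_measurable (PiM (K \<union> I) (\<lambda>_. circle_measure))"
    using f by (simp add: Lp_mem_2_iff torus_on_def Un_commute)
  then have fm2: "(\<lambda>x. ennreal ((norm (f x))\<^sup>2)) \<in> borel_measurable (PiM (K \<union> I) (\<lambda>_. circle_measure))"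
    by measurable
  define inner where "inner y = (\<integral>\<^sup>+ x. ennreal ((norm (f (merge K I (y, x))))\<^sup>2) \<partial>torus_on I)" for y
  have "(\<integral>\<^sup>+ y. inner y \<partial>torus_on K) = (\<integral>\<^sup>+ x. ennreal ((norm (f x))\<^sup>2) \<partial>torus_on (I \<union> K))"
    unfolding inner_def torus_on_def Un_commute[of I K]
    using IK fm2 by (intro circle_product.product_nn_integral_fold[symmetric]) auto
  also have "\<dots> < \<infinity>"
    using f by (simp add: Lp_mem_2_iff)
  moreover have "inner \<in> borel_measurable (torus_on K)"
  proof -
    have "(\<lambda>z. ennreal ((norm (f (merge K I z)))\<^sup>2))
        \<in> borel_measurable (PiM K (\<lambda>_. circle_measure) \<Otimes>\<^sub>M PiM I (\<lambda>_. circle_measure))"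
      using measurable_compose[OF measurable_merge fm2] by simp
    then show ?thesis
      unfolding inner_def torus_on_def by (intro I.borel_measurable_nn_integral) (simp add: split_beta')
  qed
  ultimately have "AE y in torus_on K. inner y \<noteq> \<infinity>"
    by (intro nn_integral_PInf_AE) auto
  then show ?thesis
  proof (rule AE_mp, intro AE_I2 impI)
    fix y assume y: "y \<in> space (torus_on K)" and fin: "inner y \<noteq> \<infinity>"
    have "(\<lambda>x. merge I K (x, y)) \<in> measurable (torus_on I) (PiM (K \<union> I) (\<lambda>_. circle_measure))"
      using measurable_compose[OF measurable_Pair2'[OF y[unfolded torus_on_def]] measurable_merge]
      unfolding torus_on_def by (simp add: Un_commute)
    moreover have "inner y = (\<integral>\<^sup>+ x. ennreal ((norm (f (merge I K (x, y))))\<^sup>2) \<partial>torus_on I)"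
      unfolding inner_def merge_commute[OF IK(1)] ..
    ultimately show "Lp_mem 2 (torus_on I) (\<lambda>x. f (merge I K (x, y)))"
      using fm fin by (simp add: Lp_mem_2_iff less_top measurable_compose)
  qed
qed

theorem lemma7p1:
  fixes N :: nat and f :: "(nat \<Rightarrow> complex) \<Rightarrow> complex"
    and fs :: "nat \<Rightarrow> (nat \<Rightarrow> complex) \<Rightarrow> complex"
  assumes "N \<ge> 2"
    and "Lp_mem 2 (torus N) f"
    and "\<And>n t. fs n t = (\<Sum>k\<in>{-int n..int n}. (t 1) powi k * C1 k f t)"
  shows "rconv 2 N fs f"
proof -
  have full: "(\<forall>n. Lp_mem 2 (torus N) (fs n)) \<and> Lp_conv 2 (torus N) fs f"
    using assms unfolding torus_def by (intro Lp_conv_fourier_sum_first_variable) auto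
  have "AE y in torus_on {l..N}. Lp_conv 2 (torus_on {1..<l})
          (\<lambda>n x. fs n (merge {1..<l} {l..N} (x, y))) (\<lambda>x. f (merge {1..<l} {l..N} (x, y)))"
    if l: "l \<in> {2..N}" for l
  proof -
    let ?slice = "\<lambda>g y x. g (merge {1..<l} {l..N} (x, y))"
    have "{1..<l} \<union> {l..N} = {1..N}"
      using l by auto
    then have "AE y in torus_on {l..N}. Lp_mem 2 (torus_on {1..<l}) (?slice f y)"
      using assms(2) by (intro AE_Lp_mem_2_merge) (auto simp: torus_def)
    moreover have "fs n (merge {1..<l} {l..N} (x, y))
        = (\<Sum>k\<in>{-int n..int n}. (x 1) powi k * C1 k (?slice f y) x)" for n x y
      using l by (simp add: assms(3) C1_def merge_fun_upd) (simp add: merge_def)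
    ultimately show ?thesis
      using l by (elim eventually_mono) (simp add: Lp_conv_fourier_sum_first_variable)
  qed
  with full assms(2) show ?thesis
    unfolding rconv_def by blast
qed

end
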